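(* There is an absolute constant $\delta>0$ such that for all integers $1\le k\le n$ and all vectors $u_1,\ldots,u_n\in\mathbb{R}^k$ with $|u_i|\le 1$ for every $i$, $$\Big|\{x\in\mathbb{R}^k:\ |\langle x,u_i\rangle|\le 1\text{ for every } i\}\Big|^{1/k}\ \ge\ \frac{\delta}{\sqrt{1+\log\frac nk}}.$$
   Context: $|u|$ denotes the Euclidean norm, $\langle\cdot,\cdot\rangle$ the standard inner product, $\log$ the natural logarithm, and $|K|$ the $k$-dimensional Lebesgue measure of $K\subset\mathbb{R}^k$. *)

theory Defs
  imports "HOL-Probability.Probability"
begin

text \<open>Vectors in R^k are represented as functions nat => real restricted to {..<k}
  (extensional, i.e. elements of PiE {..<k} (\<lambda>_. UNIV)); Lebesgue measure on R^k is
  the product measure PiM {..<k} (\<lambda>_. lborel).\<close>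

definition inner_k :: "nat \<Rightarrow> (nat \<Rightarrow> real) \<Rightarrow> (nat \<Rightarrow> real) \<Rightarrow> real" where
  "inner_k k x y = (\<Sum>j<k. x j * y j)"

definition norm_k :: "nat \<Rightarrow> (nat \<Rightarrow> real) \<Rightarrow> real" where
  "norm_k k x = sqrt (\<Sum>j<k. (x j)\<^sup>2)"

definition lebesgue_k :: "nat \<Rightarrow> (nat \<Rightarrow> real) measure" where
  "lebesgue_k k = PiM {..<k} (\<lambda>_. lborel)"

end

(* Let L = 1 + log(n/k) and a = 1/sqrt(216 L), and take the integer grid P = {-M..M}^k, scaled by a step
   h <= 1/(3k) and (2M+1)h >= a >= hM.  For a uniformly random grid point m every linear form
   <h m, u_i> is subgaussian with variance proxy a^2 (Hoeffding), so rounding 3<h m, u_i> to the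
   nearest integer gives a vector of n "buckets" whose l1 norm is, for at least half of P, at most
   T = 4 n e^(-3L), which is O(k (k/n)^2).  There are at most e^(3k) integer vectors of l1 norm
   at most T, so some bucket class F has at least |P| e^(-3k)/2 elements.  Two points of F differ
   by less than 1/3 in every <., u_i>, so the cubes of side h at the points of F, shifted to a common
   base point, are disjoint and lie in the body; hence its volume is at least
   |F| h^k >= |P| h^k e^(-3k)/2 >= a^k e^(-3k)/2 >= (a / (2 e^3))^k. *)

theory Submission
  imports Defs
begin

lemma cosh_le_exp_half_square:
  fixes x :: real
  shows "cosh x \<le> exp (x\<^sup>2 / 2)"
proof -
  have "cosh y \<le> exp (y\<^sup>2 / 2)" if "y \<ge> 0" for y :: real
  proof -
    have "-(2 * y) * (1/2) + ln (1 + (1/2) * (exp (2 * y) - 1)) \<le> (2 * y)\<^sup>2 / 8"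
      using Hoeffdings_lemma_aux[of "2 * y" "1/2"] that by simp
    moreover have "1 + (1/2) * (exp (2 * y) - 1) = exp y * cosh y"
      by (simp add: cosh_field_def field_simps flip: exp_add)
    ultimately have "ln (cosh y) \<le> y\<^sup>2 / 2"
      by (simp add: ln_mult power2_eq_square)
    then show ?thesis
      by (metis cosh_real_pos exp_le_cancel_iff exp_ln)
  qed
  from this[of "\<bar>x\<bar>"] show ?thesis
    by (cases "x \<ge> 0") auto
qed

lemma sum_exp_symmetric_int_interval_le:
  fixes d :: real and M :: int
  shows "(\<Sum>z\<in>{-M..M}. exp (d * of_int z)) \<le> card {-M..M} * exp (d\<^sup>2 * (of_int M)\<^sup>2 / 2)"
proof -
  have "(\<Sum>z\<in>{-M..M}. exp (d * of_int z)) = (\<Sum>z\<in>{-M..M}. exp (- (d * of_int z)))"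
    by (rule sum.reindex_bij_witness[of _ uminus uminus]) auto
  then have "(\<Sum>z\<in>{-M..M}. exp (d * of_int z)) = (\<Sum>z\<in>{-M..M}. cosh (d * of_int z))"
    by (simp add: cosh_field_def sum.distrib flip: sum_divide_distrib)
  also have "\<dots> \<le> (\<Sum>z\<in>{-M..M}. exp (d\<^sup>2 * (of_int M)\<^sup>2 / 2))"
  proof (rule sum_mono)
    fix z assume "z \<in> {-M..M}"
    then have "(of_int z)\<^sup>2 \<le> (of_int M :: real)\<^sup>2"
      by (intro abs_le_square_iff[THEN iffD1]) auto
    then have "(d * of_int z)\<^sup>2 \<le> d\<^sup>2 * (of_int M)\<^sup>2"
      by (simp add: power_mult_distrib mult_left_mono)
    then have "exp ((d * of_int z)\<^sup>2 / 2) \<le> exp (d\<^sup>2 * (of_int M)\<^sup>2 / 2)"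
      by simp
    then show "cosh (d * of_int z) \<le> exp (d\<^sup>2 * (of_int M)\<^sup>2 / 2)"
      using cosh_le_exp_half_square order_trans by blast
  qed
  finally show ?thesis by simp
qed

lemma sum_PiE_exp_linear_form_le:
  fixes h a c :: real and M :: int and v :: "'i \<Rightarrow> real"
  assumes "finite I" "0 \<le> h" "0 \<le> M" "h * of_int M \<le> a"
  shows "(\<Sum>m\<in>PiE I (\<lambda>_. {-M..M}). exp (c * (\<Sum>j\<in>I. h * of_int (m j) * v j)))
     \<le> card (PiE I (\<lambda>_. {-M..M})) * exp (c\<^sup>2 * a\<^sup>2 * (\<Sum>j\<in>I. (v j)\<^sup>2) / 2)"
proof -
  have "(\<Sum>m\<in>PiE I (\<lambda>_. {-M..M}). exp (c * (\<Sum>j\<in>I. h * of_int (m j) * v j)))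
      = (\<Sum>m\<in>PiE I (\<lambda>_. {-M..M}). \<Prod>j\<in>I. exp ((c * h * v j) * of_int (m j)))"
    using assms by (intro sum.cong refl) (simp add: exp_sum sum_distrib_left mult_ac)
  also have "\<dots> = (\<Prod>j\<in>I. \<Sum>z\<in>{-M..M}. exp ((c * h * v j) * of_int z))"
    using assms by (subst prod_sum_PiE) auto
  also have "\<dots> \<le> (\<Prod>j\<in>I. card {-M..M} * exp ((c * h * v j)\<^sup>2 * (of_int M)\<^sup>2 / 2))"
    by (intro prod_mono conjI sum_nonneg sum_exp_symmetric_int_interval_le) auto
  also have "\<dots> \<le> (\<Prod>j\<in>I. card {-M..M} * exp (c\<^sup>2 * a\<^sup>2 * (v j)\<^sup>2 / 2))"
  proof (intro prod_mono conjI mult_left_mono)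
    fix j
    have "(h * of_int M)\<^sup>2 \<le> a\<^sup>2"
      using assms by (intro power_mono) auto
    then have "(c * v j)\<^sup>2 * (h * of_int M)\<^sup>2 \<le> (c * v j)\<^sup>2 * a\<^sup>2"
      by (intro mult_left_mono) auto
    then show "exp ((c * h * v j)\<^sup>2 * (of_int M)\<^sup>2 / 2) \<le> exp (c\<^sup>2 * a\<^sup>2 * (v j)\<^sup>2 / 2)"
      by (simp add: power_mult_distrib mult_ac)
  qed auto
  also have "\<dots> = card (PiE I (\<lambda>_. {-M..M})) * exp (c\<^sup>2 * a\<^sup>2 * (\<Sum>j\<in>I. (v j)\<^sup>2) / 2)"
    using assms by (simp add: prod.distrib card_PiE sum_distrib_left sum_divide_distrib flip: exp_sum)
  finally show ?thesis .
qed

definition bucket :: "real \<Rightarrow> int" where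
  "bucket y = \<lfloor>3 * y + 1/2\<rfloor>"

lemma bucket_eq_imp_dist_less:
  "bucket y = bucket y' \<Longrightarrow> \<bar>y - y'\<bar> < 1/3"
  unfolding bucket_def by linarith

lemma abs_bucket_le_exp:
  fixes y l :: real
  assumes "6 \<le> l"
  shows "\<bar>bucket y\<bar> \<le> exp (- l / 6) * (exp (l * y) + exp (- (l * y)))"
proof (cases "bucket y = 0")
  case True
  then show ?thesis by (simp add: add_nonneg_nonneg)
next
  case False
  then have bucket_le: "\<bar>bucket y\<bar> \<le> 6 * \<bar>y\<bar>" and y_ge: "1 \<le> 6 * \<bar>y\<bar>"
    unfolding bucket_def by (auto simp: abs_if split: if_splits; linarith)+
  have "6 * \<bar>y\<bar> \<le> exp (6 * \<bar>y\<bar> - 1)"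
    using exp_ge_add_one_self[of "6 * \<bar>y\<bar> - 1"] by simp
  also have "\<dots> \<le> exp (l * (\<bar>y\<bar> - 1/6))"
  proof -
    have "0 \<le> (l/6 - 1) * (6 * \<bar>y\<bar> - 1)"
      using assms y_ge by simp
    then show ?thesis by (simp add: algebra_simps)
  qed
  also have "\<dots> = exp (- l / 6) * exp (l * \<bar>y\<bar>)"
    by (simp add: algebra_simps flip: exp_add)
  also have "\<dots> \<le> exp (- l / 6) * (exp (l * y) + exp (- (l * y)))"
    by (intro mult_left_mono) (auto simp: abs_if add_nonneg_nonneg)
  finally show ?thesis
    using bucket_le by linarith
qed

lemma sum_abs_bucket_PiE_le:
  fixes h a l :: real and M :: int and v :: "'i \<Rightarrow> real"
  assumes "finite I" "0 \<le> h" "0 \<le> M" "h * of_int M \<le> a" "(\<Sum>j\<in>I. (v j)\<^sup>2) \<le> 1" "6 \<le> l"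
  defines "P \<equiv> PiE I (\<lambda>_. {-M..M})"
  shows "(\<Sum>m\<in>P. real_of_int \<bar>bucket (\<Sum>j\<in>I. h * of_int (m j) * v j)\<bar>)
     \<le> 2 * card P * exp (l\<^sup>2 * a\<^sup>2 / 2 - l / 6)"
proof -
  define Y where "Y m = (\<Sum>j\<in>I. h * of_int (m j) * v j)" for m :: "'i \<Rightarrow> int"
  have mgf: "(\<Sum>m\<in>P. exp (c * Y m)) \<le> card P * exp (l\<^sup>2 * a\<^sup>2 / 2)" if "c\<^sup>2 = l\<^sup>2" for c
  proof -
    have "(\<Sum>m\<in>P. exp (c * Y m)) \<le> card P * exp (c\<^sup>2 * a\<^sup>2 * (\<Sum>j\<in>I. (v j)\<^sup>2) / 2)"
      unfolding P_def Y_def using assms by (intro sum_PiE_exp_linear_form_le) auto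
    also have "\<dots> \<le> card P * exp (l\<^sup>2 * a\<^sup>2 / 2)"
      using assms(5) that by (auto intro!: mult_left_mono mult_right_le_one_le sum_nonneg)
    finally show ?thesis .
  qed
  have "(\<Sum>m\<in>P. real_of_int \<bar>bucket (Y m)\<bar>) \<le> (\<Sum>m\<in>P. exp (- l / 6) * (exp (l * Y m) + exp ((- l) * Y m)))"
    using abs_bucket_le_exp[OF assms(6)] by (intro sum_mono) simp
  also have "\<dots> = exp (- l / 6) * ((\<Sum>m\<in>P. exp (l * Y m)) + (\<Sum>m\<in>P. exp ((- l) * Y m)))"
    by (simp add: sum_distrib_left sum.distrib distrib_left)
  also have "\<dots> \<le> exp (- l / 6) * (card P * exp (l\<^sup>2 * a\<^sup>2 / 2) + card P * exp (l\<^sup>2 * a\<^sup>2 / 2))"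
    by (intro mult_left_mono add_mono mgf) auto
  also have "\<dots> = 2 * card P * (exp (- l / 6) * exp (l\<^sup>2 * a\<^sup>2 / 2))"
    by simp
  also have "exp (- l / 6) * exp (l\<^sup>2 * a\<^sup>2 / 2) = exp (l\<^sup>2 * a\<^sup>2 / 2 - l / 6)"
    by (simp flip: exp_add)
  finally show ?thesis
    unfolding Y_def by simp
qed

lemma sum_exp_neg_abs_int_interval_le:
  fixes \<theta> :: real and B :: nat
  assumes "exp (- \<theta>) \<le> 1/2"
  shows "(\<Sum>z\<in>{- int B..int B}. exp (- \<theta> * of_int \<bar>z\<bar>)) \<le> 1 + 4 * exp (- \<theta>)"
proof -
  define q where "q = exp (- \<theta>)"
  have q: "0 < q" "q \<le> 1/2"
    using assms by (auto simp: q_def)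
  have exp_eq: "exp (- \<theta> * of_int \<bar>z\<bar>) = q ^ nat \<bar>z\<bar>" for z :: int
    by (simp add: q_def flip: exp_of_nat_mult)
  have partial_sum: "(\<Sum>z\<in>{- int N..int N}. q ^ nat \<bar>z\<bar>) = (1 + q - 2 * q ^ Suc N) / (1 - q)" for N
  proof (induction N)
    case 0
    then show ?case using q by (simp add: field_simps)
  next
    case (Suc N)
    have "{- int (Suc N)..int (Suc N)} = insert (int (Suc N)) (insert (- int (Suc N)) {- int N..int N})"
      by auto
    then have "(\<Sum>z\<in>{- int (Suc N)..int (Suc N)}. q ^ nat \<bar>z\<bar>)
        = (\<Sum>z\<in>{- int N..int N}. q ^ nat \<bar>z\<bar>) + 2 * q ^ Suc N"
      by (simp add: nat_add_distrib)
    also have "\<dots> = (1 + q - 2 * q ^ Suc N) / (1 - q) + 2 * q ^ Suc N"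
      by (simp only: Suc.IH)
    also have "\<dots> = (1 + q - 2 * q ^ Suc (Suc N)) / (1 - q)"
      using q by (simp add: field_simps)
    finally show ?case .
  qed
  have "(1 + q - 2 * q ^ Suc B) / (1 - q) \<le> (1 + q) / (1 - q)"
    using q by (intro divide_right_mono) auto
  also have "\<dots> \<le> 1 + 4 * q"
    using q by (simp add: field_simps)
  finally show ?thesis
    unfolding exp_eq partial_sum q_def[symmetric] .
qed

definition int_l1_ball :: "nat \<Rightarrow> real \<Rightarrow> (nat \<Rightarrow> int) set" where
  "int_l1_ball n T = {\<beta> \<in> PiE {..<n} (\<lambda>_. UNIV). (\<Sum>i<n. real_of_int \<bar>\<beta> i\<bar>) \<le> T}"

lemma int_l1_ball_subset_box:
  "int_l1_ball n T \<subseteq> PiE {..<n} (\<lambda>_. {- int (nat \<lceil>T\<rceil>)..int (nat \<lceil>T\<rceil>)})"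
proof
  fix \<beta> assume \<beta>: "\<beta> \<in> int_l1_ball n T"
  have "\<beta> i \<in> {- int (nat \<lceil>T\<rceil>)..int (nat \<lceil>T\<rceil>)}" if "i < n" for i
  proof -
    have "real_of_int \<bar>\<beta> i\<bar> \<le> T"
      using \<beta> that member_le_sum[of i "{..<n}" "\<lambda>i. real_of_int \<bar>\<beta> i\<bar>"]
      by (auto simp: int_l1_ball_def)
    then have "\<bar>\<beta> i\<bar> \<le> \<lceil>T\<rceil>"
      by (meson le_of_int_ceiling order_trans of_int_le_iff)
    moreover from this have "0 \<le> \<lceil>T\<rceil>"
      by (meson abs_ge_zero order_trans)
    ultimately show ?thesis
      by (simp add: abs_le_iff)
  qed
  then show "\<beta> \<in> PiE {..<n} (\<lambda>_. {- int (nat \<lceil>T\<rceil>)..int (nat \<lceil>T\<rceil>)})"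
    using \<beta> by (simp add: int_l1_ball_def PiE_iff)
qed

lemma finite_int_l1_ball: "finite (int_l1_ball n T)"
  by (rule finite_subset[OF int_l1_ball_subset_box]) (simp add: finite_PiE)

lemma card_int_l1_ball_le:
  fixes \<theta> T :: real
  assumes "exp (- \<theta>) \<le> 1/2"
  shows "card (int_l1_ball n T) \<le> exp (\<theta> * T) * (1 + 4 * exp (- \<theta>)) ^ n"
proof -
  define B where "B = nat \<lceil>T\<rceil>"
  define Box where "Box = PiE {..<n} (\<lambda>_. {- int B..int B})"
  have "exp (- \<theta>) < 1"
    using assms by linarith
  then have "\<theta> > 0"
    by simp
  have ball_subset: "int_l1_ball n T \<subseteq> Box"
    unfolding Box_def B_def by (rule int_l1_ball_subset_box)
  have "real (card (int_l1_ball n T)) = (\<Sum>\<beta>\<in>int_l1_ball n T. 1)"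
    by simp
  also have "\<dots> \<le> (\<Sum>\<beta>\<in>int_l1_ball n T. exp (\<theta> * T) * (\<Prod>i<n. exp (- \<theta> * of_int \<bar>\<beta> i\<bar>)))"
  proof (rule sum_mono)
    fix \<beta> assume "\<beta> \<in> int_l1_ball n T"
    then have "0 \<le> \<theta> * (T - (\<Sum>i<n. real_of_int \<bar>\<beta> i\<bar>))"
      using \<open>\<theta> > 0\<close> by (simp add: int_l1_ball_def)
    then have "1 \<le> exp (\<theta> * (T - (\<Sum>i<n. real_of_int \<bar>\<beta> i\<bar>)))"
      by simp
    also have "\<theta> * (T - (\<Sum>i<n. real_of_int \<bar>\<beta> i\<bar>)) = \<theta> * T + (\<Sum>i<n. - \<theta> * of_int \<bar>\<beta> i\<bar>)"
      by (simp add: right_diff_distrib sum_distrib_left sum_negf)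
    finally show "1 \<le> exp (\<theta> * T) * (\<Prod>i<n. exp (- \<theta> * of_int \<bar>\<beta> i\<bar>))"
      by (simp only: exp_add exp_sum finite_lessThan)
  qed
  also have "\<dots> \<le> (\<Sum>\<beta>\<in>Box. exp (\<theta> * T) * (\<Prod>i<n. exp (- \<theta> * of_int \<bar>\<beta> i\<bar>)))"
    using ball_subset by (intro sum_mono2) (auto simp: Box_def finite_PiE intro!: mult_nonneg_nonneg prod_nonneg)
  also have "\<dots> = exp (\<theta> * T) * (\<Prod>i<n. \<Sum>z\<in>{- int B..int B}. exp (- \<theta> * of_int \<bar>z\<bar>))"
    unfolding Box_def by (subst prod_sum_PiE) (auto simp: sum_distrib_left)
  also have "\<dots> \<le> exp (\<theta> * T) * (\<Prod>i<n. 1 + 4 * exp (- \<theta>))"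
    using assms by (intro mult_left_mono prod_mono conjI sum_nonneg sum_exp_neg_abs_int_interval_le) auto
  also have "\<dots> = exp (\<theta> * T) * (1 + 4 * exp (- \<theta>)) ^ n"
    by simp
  finally show ?thesis .
qed

lemma card_int_l1_ball_le_exp:
  fixes r :: real
  assumes "1 \<le> r" "real n = r * real k"
  shows "card (int_l1_ball n (4 * real n * exp (-3) / r ^ 3)) \<le> exp (3 * real k)"
proof -
  define \<theta> where "\<theta> = ln (2 * r)"
  define T where "T = 4 * real n * exp (-3) / r ^ 3"
  have exp_\<theta>: "exp (- \<theta>) = 1 / (2 * r)"
    using assms(1) by (simp add: \<theta>_def exp_minus inverse_eq_divide)
  have "exp (1::real) ^ 3 \<ge> 2 ^ 3"
    using exp_ge_add_one_self[of 1] by (intro power_mono) auto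
  then have exp3: "8 \<le> exp (3::real)"
    by (simp flip: exp_of_nat_mult)
  have "\<theta> \<le> 2 * r"
    using assms(1) ln_le_minus_one[of "2 * r"] by (simp add: \<theta>_def)
  then have "\<theta> * T \<le> 2 * r * T"
    using assms(1) by (intro mult_right_mono) (auto simp: T_def)
  also have "\<dots> = 8 * real k / (r * exp 3)"
    using assms by (simp add: T_def exp_minus power3_eq_cube field_simps)
  also have "\<dots> \<le> 8 * real k / 8"
  proof -
    have "1 * 8 \<le> r * exp 3"
      using assms(1) exp3 by (intro mult_mono) auto
    then show ?thesis
      by (intro divide_left_mono) auto
  qed
  finally have \<theta>T: "\<theta> * T \<le> real k"
    by simp
  have "(1 + 4 * exp (- \<theta>)) ^ n \<le> exp (4 * exp (- \<theta>)) ^ n"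
    by (intro power_mono) (auto simp: add.commute exp_ge_add_one_self)
  also have "\<dots> = exp (2 * real k)"
    using assms exp_\<theta> by (simp add: field_simps flip: exp_of_nat_mult)
  finally have power_le: "(1 + 4 * exp (- \<theta>)) ^ n \<le> exp (2 * real k)" .
  have "card (int_l1_ball n T) \<le> exp (\<theta> * T) * (1 + 4 * exp (- \<theta>)) ^ n"
    using assms(1) by (intro card_int_l1_ball_le) (simp add: exp_\<theta> divide_left_mono)
  also have "\<dots> \<le> exp (real k) * exp (2 * real k)"
    using \<theta>T power_le by (intro mult_mono) auto
  also have "\<dots> = exp (3 * real k)"
    by (simp flip: exp_add)
  finally show ?thesis
    by (simp add: T_def)
qed

lemma card_le_twice_card_below_mean:
  fixes f :: "'a \<Rightarrow> real" and T :: real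
  assumes "finite A" "\<And>x. x \<in> A \<Longrightarrow> 0 \<le> f x" "(\<Sum>x\<in>A. f x) \<le> card A * T / 2" "0 < T"
  shows "card A \<le> 2 * card {x \<in> A. f x \<le> T}"
proof -
  define Bad where "Bad = {x \<in> A. T < f x}"
  have "real (card Bad) * T = (\<Sum>x\<in>Bad. T)"
    by simp
  also have "\<dots> \<le> (\<Sum>x\<in>Bad. f x)"
    by (intro sum_mono) (auto simp: Bad_def)
  also have "\<dots> \<le> (\<Sum>x\<in>A. f x)"
    using assms by (intro sum_mono2) (auto simp: Bad_def)
  finally have "real (card Bad) * T \<le> real (card A) / 2 * T"
    using assms(3) by simp
  then have "card Bad \<le> card A / 2"
    using assms(4) by (simp only: mult_le_cancel_right_pos)
  moreover have "card A = card {x \<in> A. f x \<le> T} + card Bad"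
    using assms(1) by (subst card_Un_disjoint[symmetric]) (auto simp: Bad_def intro: arg_cong[where f = card])
  ultimately show ?thesis
    by linarith
qed

lemma exists_large_fiber:
  assumes "finite A" "finite B" "g ` A \<subseteq> B" "A \<noteq> {}"
  shows "\<exists>b\<in>B. card A \<le> card B * card {x \<in> A. g x = b}"
proof (rule ccontr)
  assume "\<not> ?thesis"
  then have small: "card B * card {x \<in> A. g x = b} < card A" if "b \<in> B" for b
    using that by force
  have "B \<noteq> {}"
    using assms by blast
  have "A = (\<Union>b\<in>B. {x \<in> A. g x = b})"
    using assms(3) by blast
  then have "card B * card A \<le> card B * (\<Sum>b\<in>B. card {x \<in> A. g x = b})"
    using assms(2) by (metis card_UN_le mult_le_mono2)
  also have "\<dots> = (\<Sum>b\<in>B. card B * card {x \<in> A. g x = b})"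
    by (simp add: sum_distrib_left)
  also have "\<dots> < (\<Sum>b\<in>B. card A)"
    using assms(2) \<open>B \<noteq> {}\<close> small by (intro sum_strict_mono) auto
  finally show False
    by simp
qed

lemma card_grid_le_twice_card_sparse_buckets:
  fixes k n :: nat and u :: "nat \<Rightarrow> nat \<Rightarrow> real" and h a :: real and M :: int
  assumes "1 \<le> k" "k \<le> n" and "\<And>i. i < n \<Longrightarrow> (\<Sum>j<k. (u i j)\<^sup>2) \<le> 1"
    and "0 \<le> h" "0 \<le> M" "h * of_int M \<le> a" and a: "a\<^sup>2 = 1 / (216 * (1 + ln (real n / real k)))"
  defines "P \<equiv> PiE {..<k} (\<lambda>_. {-M..M})"
  shows "card P \<le> 2 * card {m \<in> P. (\<Sum>i<n. real_of_int \<bar>bucket (inner_k k (\<lambda>j. h * of_int (m j)) (u i))\<bar>)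
    \<le> 4 * real n * exp (-3) / (real n / real k) ^ 3}"
proof -
  define r where "r = real n / real k"
  define L where "L = 1 + ln r"
  define T where "T = 4 * real n * exp (-3) / r ^ 3"
  define Y where "Y i m = inner_k k (\<lambda>j. h * of_int (m j)) (u i)" for i and m :: "nat \<Rightarrow> int"
  have r: "1 \<le> r" "real n = r * real k"
    using assms(1,2) by (auto simp: r_def)
  have "1 \<le> L"
    using r by (simp add: L_def)
  have "exp (3 * ln r) = r ^ 3"
    using r by (simp add: exp_of_nat_mult[of 3, simplified] exp_ln)
  then have exp_L: "exp (-3 * L) = exp (-3) / r ^ 3"
    by (simp add: L_def exp_diff)
  have bucket_mean: "(\<Sum>m\<in>P. real_of_int \<bar>bucket (Y i m)\<bar>) \<le> 2 * card P * exp (-3 * L)" if "i < n" for i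
  proof -
    have "a\<^sup>2 = 1 / (216 * L)"
      using a by (simp add: L_def r_def)
    then have exponent: "(36 * L)\<^sup>2 * a\<^sup>2 / 2 - 36 * L / 6 = -3 * L"
      using \<open>1 \<le> L\<close> by (simp add: power2_eq_square field_simps)
    have "(\<Sum>m\<in>P. real_of_int \<bar>bucket (Y i m)\<bar>)
        \<le> 2 * card P * exp ((36 * L)\<^sup>2 * a\<^sup>2 / 2 - 36 * L / 6)"
      unfolding P_def Y_def inner_k_def using assms \<open>1 \<le> L\<close> that
      by (intro sum_abs_bucket_PiE_le) auto
    then show ?thesis
      unfolding exponent .
  qed
  have "(\<Sum>m\<in>P. \<Sum>i<n. real_of_int \<bar>bucket (Y i m)\<bar>) = (\<Sum>i<n. \<Sum>m\<in>P. real_of_int \<bar>bucket (Y i m)\<bar>)"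
    by (rule sum.swap)
  also have "\<dots> \<le> (\<Sum>i<n. 2 * card P * exp (-3 * L))"
    by (intro sum_mono bucket_mean) simp
  also have "\<dots> = card P * T / 2"
    unfolding exp_L T_def by simp
  finally have "(\<Sum>m\<in>P. \<Sum>i<n. real_of_int \<bar>bucket (Y i m)\<bar>) \<le> card P * T / 2" .
  moreover have "0 < T"
    using assms(1,2) r by (simp add: T_def)
  ultimately show ?thesis
    unfolding Y_def T_def r_def using assms(5)
    by (intro card_le_twice_card_below_mean) (auto simp: P_def finite_PiE)
qed

lemma exists_large_bucket_class:
  fixes k n :: nat and u :: "nat \<Rightarrow> nat \<Rightarrow> real" and h a :: real and M :: int
  assumes "1 \<le> k" "k \<le> n" and "\<And>i. i < n \<Longrightarrow> (\<Sum>j<k. (u i j)\<^sup>2) \<le> 1"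
    and "0 \<le> h" "0 \<le> M" "h * of_int M \<le> a" and "a\<^sup>2 = 1 / (216 * (1 + ln (real n / real k)))"
  defines "P \<equiv> PiE {..<k} (\<lambda>_. {-M..M})"
  shows "\<exists>F \<subseteq> P. \<exists>\<beta>. (\<forall>m\<in>F. \<forall>i<n. bucket (inner_k k (\<lambda>j. h * of_int (m j)) (u i)) = \<beta> i)
     \<and> card P \<le> 2 * exp (3 * real k) * card F"
proof -
  define r where "r = real n / real k"
  define T where "T = 4 * real n * exp (-3) / r ^ 3"
  define Y where "Y i m = inner_k k (\<lambda>j. h * of_int (m j)) (u i)" for i and m :: "nat \<Rightarrow> int"
  define G where "G = {m \<in> P. (\<Sum>i<n. real_of_int \<bar>bucket (Y i m)\<bar>) \<le> T}"
  define bvec where "bvec m = restrict (\<lambda>i. bucket (Y i m)) {..<n}" for m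
  have r: "1 \<le> r" "real n = r * real k"
    using assms(1,2) by (auto simp: r_def)
  have "finite P" "P \<noteq> {}"
    using assms(5) by (auto simp: P_def finite_PiE PiE_eq_empty_iff)
  have card_G: "card P \<le> 2 * card G"
    unfolding P_def G_def Y_def T_def r_def using assms
    by (intro card_grid_le_twice_card_sparse_buckets) auto
  then have "G \<noteq> {}"
    using \<open>finite P\<close> \<open>P \<noteq> {}\<close> by auto
  moreover have "bvec ` G \<subseteq> int_l1_ball n T"
    by (intro image_subsetI) (simp add: int_l1_ball_def G_def bvec_def)
  ultimately obtain \<beta> where
    fiber: "card G \<le> card (int_l1_ball n T) * card {m \<in> G. bvec m = \<beta>}"
    using exists_large_fiber[of G "int_l1_ball n T" bvec] \<open>finite P\<close> finite_int_l1_ball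
    by (auto simp: G_def)
  define F where "F = {m \<in> G. bvec m = \<beta>}"
  have "card P \<le> 2 * card (int_l1_ball n T) * card F"
    using card_G fiber by (simp add: F_def)
  then have "real (card P) \<le> 2 * real (card (int_l1_ball n T)) * real (card F)"
    by (metis of_nat_mono of_nat_mult of_nat_numeral)
  also have "\<dots> \<le> 2 * exp (3 * real k) * card F"
    unfolding T_def using card_int_l1_ball_le_exp[OF r] by (intro mult_right_mono) auto
  finally have card_F: "real (card P) \<le> 2 * exp (3 * real k) * card F" .
  have "bucket (inner_k k (\<lambda>j. h * of_int (m j)) (u i)) = \<beta> i" if "m \<in> F" "i < n" for m i
  proof -
    have "bvec m i = \<beta> i"
      using that(1) by (simp add: F_def)
    then show ?thesis
      using that(2) by (simp add: bvec_def Y_def)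
  qed
  moreover have "F \<subseteq> P"
    by (auto simp: F_def G_def)
  ultimately show ?thesis
    using card_F by (intro exI[of _ F] conjI exI[of _ \<beta>]) auto
qed

definition slab_body :: "nat \<Rightarrow> nat \<Rightarrow> (nat \<Rightarrow> nat \<Rightarrow> real) \<Rightarrow> (nat \<Rightarrow> real) set" where
  "slab_body k n u = {x \<in> PiE {..<k} (\<lambda>_. UNIV). \<forall>i<n. \<bar>inner_k k x (u i)\<bar> \<le> 1}"

lemma sets_slab_body: "slab_body k n u \<in> sets (lebesgue_k k)"
proof -
  have "Measurable.pred (PiM {..<k} (\<lambda>_. lborel)) (\<lambda>x. \<bar>\<Sum>j<k. x j * u i j\<bar> \<le> (1::real))" for i
    by measurable
  then have "Measurable.pred (PiM {..<k} (\<lambda>_. lborel)) (\<lambda>x. \<forall>i\<in>{..<n}. \<bar>\<Sum>j<k. x j * u i j\<bar> \<le> (1::real))"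
    by (intro pred_intros_finite(3)) auto
  then have "{x \<in> space (PiM {..<k} (\<lambda>_. lborel)). \<forall>i\<in>{..<n}. \<bar>\<Sum>j<k. x j * u i j\<bar> \<le> (1::real)}
      \<in> sets (PiM {..<k} (\<lambda>_. lborel))"
    by measurable
  then show ?thesis
    by (simp add: slab_body_def lebesgue_k_def inner_k_def space_PiM)
qed

lemma norm_k_le_1D:
  assumes "norm_k k v \<le> 1"
  shows "(\<Sum>j<k. (v j)\<^sup>2) \<le> 1" and "j < k \<Longrightarrow> \<bar>v j\<bar> \<le> 1"
proof -
  show sum_le: "(\<Sum>j<k. (v j)\<^sup>2) \<le> 1"
    using assms by (simp add: norm_k_def)
  assume "j < k"
  then have "(v j)\<^sup>2 \<le> 1"
    using sum_le member_le_sum[of j "{..<k}" "\<lambda>j. (v j)\<^sup>2"] by auto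
  then show "\<bar>v j\<bar> \<le> 1"
    by (simp add: abs_square_le_1)
qed

lemma emeasure_PiM_cube:
  assumes "finite I" "0 \<le> h"
  shows "emeasure (PiM I (\<lambda>_. lborel)) (PiE I (\<lambda>j. {c j..<c j + h})) = ennreal (h ^ card I)"
proof -
  interpret product_sigma_finite "\<lambda>_::'a. lborel :: real measure"
    by (simp add: product_sigma_finite_def lborel.sigma_finite_measure_axioms)
  have "emeasure (PiM I (\<lambda>_. lborel)) (PiE I (\<lambda>j. {c j..<c j + h})) = (\<Prod>j\<in>I. emeasure lborel {c j..<c j + h})"
    using assms by (intro emeasure_PiM) auto
  also have "\<dots> = ennreal (h ^ card I)"
    using assms by (simp add: ennreal_power)
  finally show ?thesis .
qed

lemma card_mult_cube_volume_le_emeasure: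
  fixes F :: "('a \<Rightarrow> int) set" and c :: "'a \<Rightarrow> real" and h :: real
  assumes "finite I" "finite F" "F \<subseteq> PiE I (\<lambda>_. UNIV)" "0 < h"
    and K: "K \<in> sets (PiM I (\<lambda>_. lborel))"
    and cube_subset: "\<And>m. m \<in> F \<Longrightarrow> PiE I (\<lambda>j. {c j + h * m j ..< c j + h * m j + h}) \<subseteq> K"
  shows "ennreal (card F * h ^ card I) \<le> emeasure (PiM I (\<lambda>_. lborel)) K"
proof -
  define C where "C m = PiE I (\<lambda>j. {c j + h * m j ..< c j + h * m j + h})" for m :: "'a \<Rightarrow> int"
  have floor_eq: "\<lfloor>(x j - c j) / h\<rfloor> = m j" if "x \<in> C m" "j \<in> I" for x m j
  proof -
    have "c j + h * m j \<le> x j" "x j < c j + h * (m j + 1)"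
      using that unfolding C_def PiE_iff by (auto simp: distrib_left)
    then show ?thesis
      using assms(4) by (simp add: floor_eq_iff pos_le_divide_eq pos_divide_less_eq mult.commute)
  qed
  have "disjoint_family_on C F"
    unfolding disjoint_family_on_def
  proof (intro ballI impI)
    fix m m' assume "m \<in> F" "m' \<in> F" "m \<noteq> m'"
    then obtain j where "j \<in> I" "m j \<noteq> m' j"
      using assms(3) by (metis PiE_ext subsetD)
    then show "C m \<inter> C m' = {}"
      using floor_eq by (metis disjoint_iff)
  qed
  moreover have "C m \<in> sets (PiM I (\<lambda>_. lborel))" for m
    unfolding C_def using assms(1) by (intro sets_PiM_I_finite) auto
  moreover have "ennreal (card F * h ^ card I) = (\<Sum>m\<in>F. emeasure (PiM I (\<lambda>_. lborel)) (C m))"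
    using assms(1,4) by (simp add: C_def emeasure_PiM_cube ennreal_of_nat_eq_real_of_nat ennreal_mult')
  ultimately have "ennreal (card F * h ^ card I) = emeasure (PiM I (\<lambda>_. lborel)) (\<Union>m\<in>F. C m)"
    using assms(2) by (simp add: sum_emeasure image_subset_iff)
  also have "\<dots> \<le> emeasure (PiM I (\<lambda>_. lborel)) K"
    using K cube_subset by (intro emeasure_mono) (auto simp: C_def)
  finally show ?thesis .
qed

lemma cube_subset_slab_body:
  fixes p :: "nat \<Rightarrow> real"
  assumes "0 \<le> h" "h * k \<le> 1/3" "\<And>i j. i < n \<Longrightarrow> j < k \<Longrightarrow> \<bar>u i j\<bar> \<le> 1"
    and "\<And>i. i < n \<Longrightarrow> \<bar>inner_k k p (u i)\<bar> \<le> 2/3"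
  shows "PiE {..<k} (\<lambda>j. {p j ..< p j + h}) \<subseteq> slab_body k n u"
proof
  fix x assume x: "x \<in> PiE {..<k} (\<lambda>j. {p j ..< p j + h})"
  have "\<bar>inner_k k x (u i)\<bar> \<le> 1" if "i < n" for i
  proof -
    have "\<bar>inner_k k x (u i) - inner_k k p (u i)\<bar> = \<bar>\<Sum>j<k. (x j - p j) * u i j\<bar>"
      by (simp add: inner_k_def left_diff_distrib sum_subtractf)
    also have "\<dots> \<le> (\<Sum>j<k. \<bar>x j - p j\<bar> * \<bar>u i j\<bar>)"
      by (rule order_trans[OF sum_abs]) (simp add: abs_mult)
    also have "\<dots> \<le> (\<Sum>j<k. h * 1)"
      using PiE_mem[OF x] assms(3)[OF that] by (intro sum_mono mult_mono) fastforce+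
    also have "\<dots> \<le> 1/3"
      using assms(2) by (simp add: mult.commute)
    finally show ?thesis
      using assms(4)[OF that] by linarith
  qed
  then show "x \<in> slab_body k n u"
    using x by (auto simp: slab_body_def PiE_iff)
qed

lemma grid_volume_le_emeasure_slab_body:
  fixes k n :: nat and u :: "nat \<Rightarrow> nat \<Rightarrow> real" and h a :: real and M :: int
  assumes "1 \<le> k" "k \<le> n" and "\<And>i. i < n \<Longrightarrow> norm_k k (u i) \<le> 1"
    and "0 < h" "h * k \<le> 1/3" "0 \<le> M" "h * of_int M \<le> a"
    and "a\<^sup>2 = 1 / (216 * (1 + ln (real n / real k)))"
  shows "ennreal (card (PiE {..<k} (\<lambda>_. {-M..M})) * h ^ k / (2 * exp (3 * real k)))
    \<le> emeasure (lebesgue_k k) (slab_body k n u)"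
proof -
  define P where "P = PiE {..<k} (\<lambda>_. {-M..M})"
  define Y where "Y i m = inner_k k (\<lambda>j. h * of_int (m j)) (u i)" for i and m :: "nat \<Rightarrow> int"
  obtain F \<beta> where "F \<subseteq> P" and bucket_F: "\<And>m i. m \<in> F \<Longrightarrow> i < n \<Longrightarrow> bucket (Y i m) = \<beta> i"
    and card_F: "card P \<le> 2 * exp (3 * real k) * card F"
    using exists_large_bucket_class[of k n u h M a] assms norm_k_le_1D(1)
    unfolding P_def Y_def by fastforce
  have "finite P" and "P \<noteq> {}"
    using assms(6) by (auto simp: P_def finite_PiE PiE_eq_empty_iff)
  then have "F \<noteq> {}"
    using card_F by (auto simp: card_gt_0_iff)
  then obtain m0 where "m0 \<in> F"
    by blast
  have "PiE {..<k} (\<lambda>j. {- h * m0 j + h * m j ..< - h * m0 j + h * m j + h}) \<subseteq> slab_body k n u"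
    if "m \<in> F" for m
  proof (rule cube_subset_slab_body)
    fix i assume "i < n"
    then have "\<bar>Y i m - Y i m0\<bar> < 1/3"
      using bucket_F that \<open>m0 \<in> F\<close> by (metis bucket_eq_imp_dist_less)
    moreover have "inner_k k (\<lambda>j. - h * m0 j + h * m j) (u i) = Y i m - Y i m0"
      by (simp add: Y_def inner_k_def algebra_simps sum_subtractf)
    ultimately show "\<bar>inner_k k (\<lambda>j. - h * m0 j + h * m j) (u i)\<bar> \<le> 2/3"
      by simp
  qed (use assms norm_k_le_1D(2) in auto)
  then have "ennreal (card F * h ^ card {..<k}) \<le> emeasure (lebesgue_k k) (slab_body k n u)"
    unfolding lebesgue_k_def using \<open>F \<subseteq> P\<close> \<open>finite P\<close> \<open>0 < h\<close> sets_slab_body[of k n u]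
    by (intro card_mult_cube_volume_le_emeasure[where c = "\<lambda>j. - h * m0 j"])
      (auto simp: P_def lebesgue_k_def intro: finite_subset)
  moreover have "card P * h ^ k / (2 * exp (3 * real k)) \<le> card F * h ^ k"
    using card_F \<open>0 < h\<close> by (simp add: field_simps)
  ultimately show ?thesis
    unfolding P_def by (metis card_lessThan ennreal_leI order_trans)
qed

lemma emeasure_slab_body_ge:
  fixes k n :: nat and u :: "nat \<Rightarrow> nat \<Rightarrow> real"
  assumes "1 \<le> k" "k \<le> n" "\<And>i. i < n \<Longrightarrow> norm_k k (u i) \<le> 1"
  shows "ennreal ((1 / (2 * exp 3 * sqrt 216) / sqrt (1 + ln (real n / real k))) ^ k)
    \<le> emeasure (lebesgue_k k) (slab_body k n u)"
proof -
  define L where "L = 1 + ln (real n / real k)"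
  define a where "a = 1 / sqrt (216 * L)"
  define h where "h = min a (1 / (3 * real k))"
  define M where "M = \<lfloor>a / h\<rfloor>"
  have "1 \<le> L"
    using assms(1,2) by (simp add: L_def)
  then have "0 < a" "a\<^sup>2 = 1 / (216 * L)"
    by (simp_all add: a_def power_divide)
  have "0 < h" "h \<le> a" "h * k \<le> 1/3"
    using \<open>0 < a\<close> assms(1) by (auto simp: h_def min_def field_simps)
  then have "1 \<le> a / h"
    by simp
  then have "0 \<le> M"
    by (simp add: M_def)
  have "of_int M \<le> a / h" "a / h < of_int M + 1"
    unfolding M_def by linarith+
  then have "h * of_int M \<le> a" "a < (of_int M + 1) * h"
    using \<open>0 < h\<close> by (simp_all add: pos_le_divide_eq pos_divide_less_eq mult.commute)
  moreover have "(of_int M + 1) * h \<le> (2 * of_int M + 1) * h"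
    using \<open>0 < h\<close> \<open>0 \<le> M\<close> by (intro mult_right_mono) auto
  ultimately have "a \<le> (2 * of_int M + 1) * h"
    by linarith
  have "(1 / (2 * exp 3 * sqrt 216) / sqrt L) ^ k = a ^ k / (2 ^ k * exp (3 * real k))"
    using \<open>1 \<le> L\<close>
    by (simp add: a_def real_sqrt_mult power_divide power_mult_distrib mult.commute
        flip: exp_of_nat_mult)
  also have "\<dots> \<le> a ^ k / (2 * exp (3 * real k))"
    using assms(1) \<open>0 < a\<close> by (intro divide_left_mono) (auto simp: self_le_power)
  also have "\<dots> \<le> ((2 * of_int M + 1) * h) ^ k / (2 * exp (3 * real k))"
    using \<open>0 < a\<close> \<open>a \<le> (2 * of_int M + 1) * h\<close> by (intro divide_right_mono power_mono) auto
  also have "\<dots> = card (PiE {..<k} (\<lambda>_. {-M..M})) * h ^ k / (2 * exp (3 * real k))"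
    using \<open>0 \<le> M\<close> by (simp add: card_PiE power_mult_distrib)
  finally have "ennreal ((1 / (2 * exp 3 * sqrt 216) / sqrt L) ^ k)
      \<le> ennreal (card (PiE {..<k} (\<lambda>_. {-M..M})) * h ^ k / (2 * exp (3 * real k)))"
    by (rule ennreal_leI)
  also have "\<dots> \<le> emeasure (lebesgue_k k) (slab_body k n u)"
    using assms \<open>0 < h\<close> \<open>h * k \<le> 1/3\<close> \<open>0 \<le> M\<close> \<open>h * of_int M \<le> a\<close> \<open>a\<^sup>2 = 1 / (216 * L)\<close>
    unfolding L_def by (intro grid_volume_le_emeasure_slab_body) auto
  finally show ?thesis
    unfolding L_def .
qed

theorem theorem1:
  shows "\<exists>\<delta>::real. \<delta> > 0 \<and>
    (\<forall>k n :: nat. \<forall>u :: nat \<Rightarrow> nat \<Rightarrow> real.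
       1 \<le> k \<longrightarrow> k \<le> n \<longrightarrow> (\<forall>i<n. norm_k k (u i) \<le> 1) \<longrightarrow>
       emeasure (lebesgue_k k)
         {x \<in> PiE {..<k} (\<lambda>_. UNIV). \<forall>i<n. \<bar>inner_k k x (u i)\<bar> \<le> 1}
       \<ge> ennreal ((\<delta> / sqrt (1 + ln (real n / real k))) ^ k))"
proof (intro exI[of _ "1 / (2 * exp 3 * sqrt 216)"] conjI allI impI)
  fix k n :: nat and u :: "nat \<Rightarrow> nat \<Rightarrow> real"
  assume "1 \<le> k" "k \<le> n" "\<forall>i<n. norm_k k (u i) \<le> 1"
  then show "ennreal ((1 / (2 * exp 3 * sqrt 216) / sqrt (1 + ln (real n / real k))) ^ k)
    \<le> emeasure (lebesgue_k k) {x \<in> PiE {..<k} (\<lambda>_. UNIV). \<forall>i<n. \<bar>inner_k k x (u i)\<bar> \<le> 1}"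
    using emeasure_slab_body_ge[of k n u] by (simp add: slab_body_def)
qed simp

end
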